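(* A distribution $P^0\in L\cap\Delta^{n-1}_+$ is a minimal point of $L\cap\Delta^{n-1}_+$ with respect to the (global) Markov order $\succ_{P^*}$ (i.e. there is no $P^1\in L\cap\Delta^{n-1}_+$, $P^1\neq P^0$, with $P^0\succ_{P^*}P^1$) if and only if $\bigl(P^0+\mathbf{Q}(P^0,P^* )\bigr)\cap L=\{P^0\}$.
   Context: Fix $n\ge 2$ and a positive equilibrium distribution $P^*=(p^*_i)$, $p^*_i>0$, $\sum_i p^*_i=1$. Let $\Delta^{n-1}_+=\{P\in\mathbb{R}^n: p_i>0,\ \sum_i p_i=1\}$. A Markov chain with equilibrium $P^*$ is given by rate constants $q_{ij}\ge 0$ ($i\neq j$) satisfying $\sum_{j\ne i}q_{ij}p^*_j=\bigl(\sum_{j\ne i}q_{ji}\bigr)p^*_i$ for all $i$; its Kolmogorov equation is $\frac{dp_i}{dt}=\sum_{j\ne i}(q_{ij}p_j-q_{ji}p_i)$. Markov preorder: $P^0\succ^0_{P^*}P^1$ if for some Markov chain with equilibrium $P^*$ the solution of the Kolmogorov equation with $P(0)=P^0$ satisfies $P(1)=P^1$. The (global) Markov order $\succ_{P^*}$ is the closed transitive closure of $\succ^0_{P^*}$. For $i\neq j$ let $\gamma^{ji}$ be the vector with $\gamma^{ji}_j=-1$, $\gamma^{ji}_i=1$, other coordinates $0$; ${\rm cone}$ denotes non-negative linear combinations; ${\rm sign}$ is the three-valued sign function; $\mathbf{Q}(P,P^* )={\rm cone}\{\gamma^{ji}\,{\rm sign}(\tfrac{p_j}{p^*_j}-\tfrac{p_i}{p^*_i})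 : 1\le j<i\le n\}$. The condition manifold is $L=\{P:\ \sum_j m_{rj}p_j=M_r,\ r=0,\dots,k\}$ with $m_{0j}=1$, $M_0=1$, and $L\cap\Delta^{n-1}_+\ne\emptyset$. *)

theory Defs
  imports "HOL-Analysis.Analysis"
begin

text \<open>Distributions are vectors in real^'n, the index type 'n being finite and
linearly ordered (the order is only used for the index condition j < i in the
definition of the cone Q).\<close>

definition pos_simplex :: "(real^'n) set" where
  "pos_simplex = {p. (\<forall>i. p$i > 0) \<and> (\<Sum>i\<in>UNIV. p$i) = 1}"

definition markov_chain :: "real^'n \<Rightarrow> ('n \<Rightarrow> 'n \<Rightarrow> real) \<Rightarrow> bool" where
  "markov_chain pstar q \<longleftrightarrow>
     (\<forall>i j. i \<noteq> j \<longrightarrow> q i j \<ge> 0) \<and>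
     (\<forall>i. (\<Sum>j\<in>-{i}. q i j * pstar$j) = (\<Sum>j\<in>-{i}. q j i) * pstar$i)"

definition kolmogorov_rhs :: "('n \<Rightarrow> 'n \<Rightarrow> real) \<Rightarrow> real^'n \<Rightarrow> real^'n" where
  "kolmogorov_rhs q p = (\<chi> i. \<Sum>j\<in>-{i}. q i j * p$j - q j i * p$i)"

text \<open>Markov preorder: P0 is carried to P1 in time 1 by some Markov chain with
equilibrium pstar (the linear Kolmogorov equation has a unique solution, so
existence of a solution on [0,1] with P(1) = P1 is the same as the solution
satisfying P(1) = P1).\<close>
definition markov_preorder :: "real^'n \<Rightarrow> real^'n \<Rightarrow> real^'n \<Rightarrow> bool" where
  "markov_preorder pstar p0 p1 \<longleftrightarrow>
     (\<exists>q P. markov_chain pstar q \<and> P 0 = p0 \<and> P 1 = p1 \<and>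
        (\<forall>t\<in>{0..1}. (P has_vector_derivative kolmogorov_rhs q (P t)) (at t within {0..1})))"

definition markov_order :: "real^'n \<Rightarrow> ((real^'n) \<times> (real^'n)) set" where
  "markov_order pstar =
     \<Inter>{R. R \<subseteq> pos_simplex \<times> pos_simplex \<and>
          {(a,b). a \<in> pos_simplex \<and> b \<in> pos_simplex \<and> markov_preorder pstar a b} \<subseteq> R \<and>
          trans R \<and> closedin (top_of_set (pos_simplex \<times> pos_simplex)) R}"

definition gamma_vec :: "'n \<Rightarrow> 'n \<Rightarrow> real^'n" where
  "gamma_vec j i = (\<chi> k. if k = j then -1 else if k = i then 1 else 0)"

definition Qcone :: "real^('n::{finite,linorder}) \<Rightarrow> real^('n::{finite,linorder}) \<Rightarrow> (real^('n::{finite,linorder})) set" where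
  "Qcone p pstar =
     {x. \<exists>c. (\<forall>j i. c j i \<ge> 0) \<and>
        x = (\<Sum>(j,i)\<in>{(j,i). j < i}.
               c j i *\<^sub>R (sgn (p$j / pstar$j - p$i / pstar$i) *\<^sub>R gamma_vec j i))}"

definition cond_manifold :: "nat \<Rightarrow> (nat \<Rightarrow> real^'n) \<Rightarrow> (nat \<Rightarrow> real) \<Rightarrow> (real^'n) set" where
  "cond_manifold k m M = {p. \<forall>r\<le>k. (\<Sum>j\<in>UNIV. m r $ j * p $ j) = M r}"

end

theory Submission
  imports Defs
begin

(* A Markov chain with equilibrium P* cannot increase any function sum_i p*_i phi(p_i / p*_i)
   with phi convex, and by continuity neither can the global Markov order. For smooth (softplus)
   approximations of phi(y) = max(y - tau, 0) this says that the mass sum_i max(p_i - tau p*_i, 0)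
   above each level tau never increases. Cutting at the level of an up-set of the ratios
   p_i / p*_i of P^0 shows that P^1 - P^0 puts non-positive mass on every such up-set; by
   Farkas' lemma, with Abel summation turning up-sets into monotone weights, P^1 - P^0 lies in
   the cone Q at P^0. Conversely, every generator of this cone is realised near P^0 by a chain
   that only exchanges mass between two states, so P^0 + eps x is reachable for x in the cone and
   small eps > 0. Since L is affine, a point P^0 + x of L other than P^0 then gives the reachable
   point P^0 + eps x of L. *)

lemma card_range_max_less:
  fixes w :: "'a \<Rightarrow> 'b::linorder"
  assumes "finite (range w)" and "c \<in> range w" and "Min (range w) < c"
  shows "card (range (\<lambda>i. max (w i) c)) < card (range w)"
proof (rule psubset_card_mono[OF \<open>finite (range w)\<close>])
  have "range (\<lambda>i. max (w i) c) \<subseteq> range w - {Min (range w)}"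
    using assms(2,3) by (auto simp: max_def)
  moreover have "Min (range w) \<in> range w"
    using assms(1) by (intro Min_in) auto
  ultimately show "range (\<lambda>i. max (w i) c) \<subset> range w" by blast
qed

lemma monotone_sum_nonpos_if_upset_sums_nonpos:
  fixes v x w :: "'a::finite \<Rightarrow> real"
  assumes sum_zero: "sum v UNIV = 0"
    and upset: "\<And>U. (\<And>i j. i \<in> U \<Longrightarrow> x i < x j \<Longrightarrow> j \<in> U) \<Longrightarrow> sum v U \<le> 0"
    and mono: "\<And>i j. x i < x j \<Longrightarrow> w i \<le> w j"
  shows "(\<Sum>i\<in>UNIV. w i * v i) \<le> 0"
  using mono
proof (induction "card (range w)" arbitrary: w rule: less_induct)
  case less
  show ?case
  proof (cases "card (range w) \<le> 1")
    case True
    obtain c where "w i = c" for i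
      using True card_le_Suc0_iff_eq[of "range w"] by auto
    then have "(\<Sum>i\<in>UNIV. w i * v i) = c * sum v UNIV"
      by (simp add: sum_distrib_left)
    then show ?thesis using sum_zero by simp
  next
    case False
    \<comment> \<open>Raise the least value m of w to the next value m2; this removes one value,
      and the correction is a multiple of the sum of v over the up-set {i. m < w i}.\<close>
    define m where "m = Min (range w)"
    define m2 where "m2 = Min (range w - {m})"
    define U where "U = {i. m < w i}"
    have m_le: "\<And>i. m \<le> w i"
      unfolding m_def by simp
    have "range w - {m} \<noteq> {}"
    proof
      assume "range w - {m} = {}"
      moreover have "m \<in> range w"
        unfolding m_def by (intro Min_in) auto
      ultimately have "range w = {m}" by blast
      then show False using False by simp
    qed
    then have m2_in: "m2 \<in> range w - {m}"
      unfolding m2_def by (intro Min_in) auto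
    have m2_le: "m2 \<le> w i" if "w i \<noteq> m" for i
      unfolding m2_def using that by (intro Min_le) auto
    have "m < m2"
      using m2_in m_le by (auto simp: order_le_less)
    have IH: "(\<Sum>i\<in>UNIV. max (w i) m2 * v i) \<le> 0"
    proof (rule less.hyps)
      show "card (range (\<lambda>i. max (w i) m2)) < card (range w)"
        using m2_in \<open>m < m2\<close> by (intro card_range_max_less) (auto simp: m_def)
      show "\<And>i j. x i < x j \<Longrightarrow> max (w i) m2 \<le> max (w j) m2"
        using less.prems by (fastforce intro: max.mono)
    qed
    have "sum v U \<le> 0"
      using less.prems by (intro upset) (auto simp: U_def intro: less_le_trans)
    have "w i * v i = max (w i) m2 * v i + (m - m2) * (if i \<in> -U then v i else 0)" for i
      using m_le[of i] m2_le[of i] \<open>m < m2\<close> by (auto simp: U_def max_def algebra_simps)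
    then have "(\<Sum>i\<in>UNIV. w i * v i) = (\<Sum>i\<in>UNIV. max (w i) m2 * v i) + (m - m2) * sum v (- U)"
      by (simp add: sum.distrib sum.If_cases Compl_eq flip: sum_distrib_left)
    also have "sum v (- U) = - sum v U"
      using sum.subset_diff[of U UNIV v] sum_zero by (simp add: Compl_eq_Diff_UNIV)
    finally show ?thesis
      using IH mult_nonpos_nonpos[of "m - m2" "sum v U"] \<open>sum v U \<le> 0\<close> \<open>m < m2\<close> by linarith
  qed
qed

lemma mem_convex_cone_hull_if_dual_nonneg:
  fixes v :: "'a::euclidean_space"
  assumes "finite G" and dual: "\<And>a. (\<And>g. g \<in> G \<Longrightarrow> 0 \<le> inner a g) \<Longrightarrow> 0 \<le> inner a v"
  shows "v \<in> convex_cone hull G"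
proof (rule ccontr)
  let ?K = "convex_cone hull G"
  assume "v \<notin> ?K"
  then obtain a b where av: "inner a v < b" and aK: "\<And>y. y \<in> ?K \<Longrightarrow> b < inner a y"
    using separating_hyperplane_closed_point[OF convex_convex_cone_hull
        closed_convex_cone_hull[OF \<open>finite G\<close>]] by blast
  have "b < 0" using aK[OF convex_cone_hull_contains_0] by simp
  have "0 \<le> inner a g" if "g \<in> G" for g
  proof (rule ccontr)
    assume "\<not> 0 \<le> inner a g"
    \<comment> \<open>then a suitable positive multiple of g violates the separation\<close>
    then have "(b / inner a g) *\<^sub>R g \<in> ?K"
      using \<open>b < 0\<close> that by (intro convex_cone_hull_mul hull_inc) (auto simp: divide_nonpos_neg)
    then show False using aK \<open>\<not> 0 \<le> inner a g\<close> by fastforce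
  qed
  then show False using dual av \<open>b < 0\<close> by fastforce
qed

lemma convex_cone_Qcone: "convex_cone (Qcone p pstar)"
  unfolding convex_cone_iff
proof (intro conjI ballI allI impI)
  show "0 \<in> Qcone p pstar"
    unfolding Qcone_def by (auto intro!: exI[of _ "\<lambda>_ _. 0"])
next
  fix x y assume "x \<in> Qcone p pstar" "y \<in> Qcone p pstar"
  then obtain c d where "\<forall>j i. 0 \<le> c j i" "\<forall>j i. 0 \<le> d j i"
    and "x = (\<Sum>(j,i)\<in>{(j,i). j < i}. c j i *\<^sub>R (sgn (p$j / pstar$j - p$i / pstar$i) *\<^sub>R gamma_vec j i))"
    and "y = (\<Sum>(j,i)\<in>{(j,i). j < i}. d j i *\<^sub>R (sgn (p$j / pstar$j - p$i / pstar$i) *\<^sub>R gamma_vec j i))"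
    unfolding Qcone_def by blast
  then show "x + y \<in> Qcone p pstar"
    unfolding Qcone_def
    by (auto intro!: exI[of _ "\<lambda>j i. c j i + d j i"] simp: distrib_right scaleR_add_left case_prod_beta
        simp flip: sum.distrib)
next
  fix x and t :: real assume "x \<in> Qcone p pstar" "0 \<le> t"
  then obtain c where "\<forall>j i. 0 \<le> c j i"
    and "x = (\<Sum>(j,i)\<in>{(j,i). j < i}. c j i *\<^sub>R (sgn (p$j / pstar$j - p$i / pstar$i) *\<^sub>R gamma_vec j i))"
    unfolding Qcone_def by blast
  then show "t *\<^sub>R x \<in> Qcone p pstar"
    unfolding Qcone_def using \<open>0 \<le> t\<close>
    by (auto intro!: exI[of _ "\<lambda>j i. t * c j i"] simp: scaleR_sum_right case_prod_beta mult.assoc)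
qed

lemma generator_in_Qcone:
  assumes "j < i"
  shows "sgn (p$j / pstar$j - p$i / pstar$i) *\<^sub>R gamma_vec j i \<in> Qcone p pstar"
proof -
  let ?g = "\<lambda>(j,i). sgn (p$j / pstar$j - p$i / pstar$i) *\<^sub>R gamma_vec j i"
  have "(\<Sum>e\<in>{(j',i'). j' < i'}. (if e = (j,i) then 1 else 0) *\<^sub>R ?g e) = ?g (j,i)"
    using assms by (simp add: if_distrib[of "\<lambda>c. c *\<^sub>R _"] sum.delta' cong: if_cong)
  then show ?thesis
    unfolding Qcone_def
    by (auto intro!: exI[of _ "\<lambda>j' i'. if (j',i') = (j,i) then 1 else 0"] simp: case_prod_beta)
qed

lemma inner_gamma_vec:
  assumes "j \<noteq> i"
  shows "inner a (gamma_vec j i) = a$i - a$j"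
  using assms by (simp add: inner_vec_def gamma_vec_def if_distrib[of "\<lambda>c. _ * c"] sum.If_cases
      Int_absorb1 cong: if_cong)

lemma mem_Qcone_if_upset_sums_nonpos:
  fixes p pstar v :: "real^('n::{finite,linorder})"
  assumes "(\<Sum>k\<in>UNIV. v$k) = 0"
    and "\<And>U. (\<And>i j. i \<in> U \<Longrightarrow> p$i / pstar$i < p$j / pstar$j \<Longrightarrow> j \<in> U) \<Longrightarrow> (\<Sum>k\<in>U. v$k) \<le> 0"
  shows "v \<in> Qcone p pstar"
proof -
  define x where "x i = p$i / pstar$i" for i
  define G where "G = (\<lambda>(j,i). sgn (x j - x i) *\<^sub>R gamma_vec j i) ` {(j,i). j < i}"
  have "v \<in> convex_cone hull G"
  proof (rule mem_convex_cone_hull_if_dual_nonneg)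
    show "finite G" unfolding G_def by simp
  next
    fix a assume aG: "\<And>g. g \<in> G \<Longrightarrow> 0 \<le> inner a g"
    \<comment> \<open>testing a against the generator for the pair {i,j} shows that -a is monotone in x\<close>
    have "- a$i \<le> - a$j" if "x i < x j" for i j
    proof (cases "j < i")
      case True
      then have "gamma_vec j i \<in> G" unfolding G_def using that by force
      then show ?thesis using aG inner_gamma_vec[of j i a] True by fastforce
    next
      case False
      then have "i < j" using that by (metis neq_iff order_less_irrefl)
      then have "- gamma_vec i j \<in> G" unfolding G_def using that by force
      then show ?thesis using aG[of "- gamma_vec i j"] inner_gamma_vec[of i j a] \<open>i < j\<close> by simp
    qed
    then have "(\<Sum>k\<in>UNIV. - a$k * v$k) \<le> 0"
      using assms by (intro monotone_sum_nonpos_if_upset_sums_nonpos[where x = x]) (auto simp: x_def)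
    then show "0 \<le> inner a v" by (simp add: inner_vec_def sum_negf)
  qed
  moreover have "convex_cone hull G \<subseteq> Qcone p pstar"
    by (rule hull_minimal) (auto simp: G_def x_def generator_in_Qcone convex_cone_Qcone)
  ultimately show ?thesis by blast
qed

definition f_divergence :: "(real \<Rightarrow> real) \<Rightarrow> real^'n \<Rightarrow> real^'n \<Rightarrow> real" where
  "f_divergence \<phi> pstar p = (\<Sum>i\<in>UNIV. pstar$i * \<phi> (p$i / pstar$i))"

lemma sum_offdiag_swap:
  fixes f :: "'a::finite \<Rightarrow> 'a \<Rightarrow> real"
  shows "(\<Sum>i\<in>UNIV. \<Sum>j\<in>-{i}. f i j) = (\<Sum>i\<in>UNIV. \<Sum>j\<in>-{i}. f j i)"
proof -
  have offdiag: "(\<Sum>j\<in>-{i}. g j) = (\<Sum>j\<in>UNIV. g j) - g i" for g :: "'a \<Rightarrow> real" and i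
    using sum.remove[of UNIV i g] by (simp add: Compl_eq_Diff_UNIV)
  show ?thesis unfolding offdiag sum_subtractf using sum.swap[of f UNIV UNIV] by simp
qed

(* With psi y = y phi' y - phi y, the tangent inequality bounds each transition term, and the
   balance condition makes the resulting psi-terms cancel. *)
lemma sum_deriv_kolmogorov_rhs_nonpos:
  fixes pstar p :: "real^'n"
  assumes tangent: "\<And>y z. \<phi>' y * (z - y) \<le> \<phi> z - \<phi> y"
    and chain: "markov_chain pstar q" and pos: "\<And>i. 0 < pstar$i"
  shows "(\<Sum>i\<in>UNIV. \<phi>' (p$i / pstar$i) * kolmogorov_rhs q p $ i) \<le> 0"
proof -
  define x where "x i = p$i / pstar$i" for i
  define \<psi> where "\<psi> y = y * \<phi>' y - \<phi> y" for y
  have p_eq: "p$i = pstar$i * x i" for i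
    unfolding x_def using pos[of i] by simp
  have q_nonneg: "\<And>i j. i \<noteq> j \<Longrightarrow> 0 \<le> q i j"
    and balance: "\<And>i. (\<Sum>j\<in>-{i}. q i j * pstar$j) = (\<Sum>j\<in>-{i}. q j i) * pstar$i"
    using chain unfolding markov_chain_def by auto
  have "(\<Sum>i\<in>UNIV. \<phi>' (x i) * kolmogorov_rhs q p $ i)
      = (\<Sum>i\<in>UNIV. \<Sum>j\<in>-{i}. q i j * p$j * \<phi>' (x i))
        - (\<Sum>i\<in>UNIV. \<Sum>j\<in>-{i}. q j i * p$i * \<phi>' (x i))"
    unfolding kolmogorov_rhs_def by (simp add: sum_distrib_left algebra_simps flip: sum_subtractf)
  also have "(\<Sum>i\<in>UNIV. \<Sum>j\<in>-{i}. q j i * p$i * \<phi>' (x i))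
      = (\<Sum>i\<in>UNIV. \<Sum>j\<in>-{i}. q i j * p$j * \<phi>' (x j))"
    by (rule sum_offdiag_swap)
  also have "(\<Sum>i\<in>UNIV. \<Sum>j\<in>-{i}. q i j * p$j * \<phi>' (x i))
      - (\<Sum>i\<in>UNIV. \<Sum>j\<in>-{i}. q i j * p$j * \<phi>' (x j))
      = (\<Sum>i\<in>UNIV. \<Sum>j\<in>-{i}. q i j * pstar$j * (x j * (\<phi>' (x i) - \<phi>' (x j))))"
    by (simp add: p_eq algebra_simps flip: sum_subtractf)
  also have "\<dots> \<le> (\<Sum>i\<in>UNIV. \<Sum>j\<in>-{i}. q i j * pstar$j * (\<psi> (x i) - \<psi> (x j)))"
  proof (intro sum_mono mult_left_mono)
    fix i j :: 'n assume "j \<in> -{i}"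
    then show "0 \<le> q i j * pstar$j" using q_nonneg[of i j] pos[of j] by simp
    show "x j * (\<phi>' (x i) - \<phi>' (x j)) \<le> \<psi> (x i) - \<psi> (x j)"
      using tangent[of "x i" "x j"] unfolding \<psi>_def by (simp add: algebra_simps)
  qed
  also have "\<dots> = (\<Sum>i\<in>UNIV. (\<Sum>j\<in>-{i}. q i j * pstar$j) * \<psi> (x i))
      - (\<Sum>i\<in>UNIV. \<Sum>j\<in>-{i}. q i j * pstar$j * \<psi> (x j))"
    by (simp add: sum_distrib_left algebra_simps flip: sum_subtractf)
  also have "(\<Sum>i\<in>UNIV. \<Sum>j\<in>-{i}. q i j * pstar$j * \<psi> (x j))
      = (\<Sum>i\<in>UNIV. \<Sum>j\<in>-{i}. q j i * pstar$i * \<psi> (x i))"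
    by (rule sum_offdiag_swap)
  also have "\<dots> = (\<Sum>i\<in>UNIV. (\<Sum>j\<in>-{i}. q i j * pstar$j) * \<psi> (x i))"
    by (simp add: balance sum_distrib_right)
  finally show ?thesis unfolding x_def by simp
qed

lemma f_divergence_markov_preorder:
  assumes convex: "convex_on UNIV \<phi>" and deriv: "\<And>y. (\<phi> has_real_derivative \<phi>' y) (at y)"
    and pos: "\<And>i. 0 < pstar$i" and "markov_preorder pstar a b"
  shows "f_divergence \<phi> pstar b \<le> f_divergence \<phi> pstar a"
proof -
  obtain q P where chain: "markov_chain pstar q" and "P 0 = a" "P 1 = b"
    and P_deriv: "\<And>t. t \<in> {0..1} \<Longrightarrow> (P has_vector_derivative kolmogorov_rhs q (P t)) (at t within {0..1})"
    using \<open>markov_preorder pstar a b\<close> unfolding markov_preorder_def by blast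
  have tangent: "\<phi>' y * (z - y) \<le> \<phi> z - \<phi> y" for y z
    by (rule convex_on_imp_above_tangent[OF convex connected_UNIV]) (use deriv in auto)
  define h where "h t = f_divergence \<phi> pstar (P t)" for t
  define D where "D t = (\<Sum>i\<in>UNIV. \<phi>' (P t $ i / pstar$i) * kolmogorov_rhs q (P t) $ i)" for t
  have "(h has_real_derivative D t) (at t within {0..1})" if "t \<in> {0..1}" for t
  proof -
    have "((\<lambda>t. P t $ i) has_real_derivative kolmogorov_rhs q (P t) $ i) (at t within {0..1})" for i
      using bounded_linear.has_vector_derivative[OF bounded_linear_vec_nth P_deriv[OF that]]
      by (simp add: has_real_derivative_iff_has_vector_derivative)
    then have "(h has_real_derivative
        (\<Sum>i\<in>UNIV. pstar$i * (\<phi>' (P t $ i / pstar$i) * (kolmogorov_rhs q (P t) $ i / pstar$i))))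
        (at t within {0..1})"
      unfolding h_def f_divergence_def
      by (intro DERIV_sum DERIV_cmult DERIV_chain2[where f = \<phi>, OF deriv] DERIV_cdivide)
    moreover have "(\<Sum>i\<in>UNIV. pstar$i * (\<phi>' (P t $ i / pstar$i) * (kolmogorov_rhs q (P t) $ i / pstar$i))) = D t"
      unfolding D_def using pos by (intro sum.cong) (auto simp: field_simps less_imp_neq[symmetric])
    ultimately show ?thesis by simp
  qed
  moreover have "D t \<le> 0" for t
    unfolding D_def by (rule sum_deriv_kolmogorov_rhs_nonpos[OF tangent chain pos])
  ultimately obtain \<xi> where "\<xi> \<in> {0..1}" "h 1 - h 0 = D \<xi>"
    using mvt_very_simple[of 0 1 h "\<lambda>t x. D t * x"] unfolding has_field_derivative_def by auto
  then show ?thesis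
    using \<open>D \<xi> \<le> 0\<close> \<open>P 0 = a\<close> \<open>P 1 = b\<close> unfolding h_def by simp
qed

lemma markov_order_least:
  assumes "R \<subseteq> pos_simplex \<times> pos_simplex" and "trans R"
    and "closedin (top_of_set (pos_simplex \<times> pos_simplex)) R"
    and "\<And>a b. a \<in> pos_simplex \<Longrightarrow> b \<in> pos_simplex \<Longrightarrow> markov_preorder pstar a b \<Longrightarrow> (a, b) \<in> R"
  shows "markov_order pstar \<subseteq> R"
  unfolding markov_order_def using assms by (intro Inter_lower) auto

lemma markov_order_simplex:
  assumes "(a, b) \<in> markov_order pstar"
  shows "a \<in> pos_simplex" "b \<in> pos_simplex"
  using markov_order_least[of "pos_simplex \<times> pos_simplex" pstar] assms
    closedin_topspace[of "top_of_set (pos_simplex \<times> pos_simplex)"]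
  unfolding trans_def by auto

lemma markov_preorder_imp_markov_order:
  "a \<in> pos_simplex \<Longrightarrow> b \<in> pos_simplex \<Longrightarrow> markov_preorder pstar a b \<Longrightarrow> (a, b) \<in> markov_order pstar"
  unfolding markov_order_def by blast

lemma markov_order_trans:
  "(a, b) \<in> markov_order pstar \<Longrightarrow> (b, c) \<in> markov_order pstar \<Longrightarrow> (a, c) \<in> markov_order pstar"
  unfolding markov_order_def by (blast dest: transD)

lemma markov_preorder_refl: "markov_preorder pstar p p"
proof -
  have "kolmogorov_rhs (\<lambda>_ _. 0) p = 0"
    by (simp add: kolmogorov_rhs_def vec_eq_iff)
  then show ?thesis
    unfolding markov_preorder_def markov_chain_def
    by (auto intro!: exI[of _ "\<lambda>_ _. 0"] exI[of _ "\<lambda>_. p"])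
qed

lemma markov_order_antimono:
  fixes f :: "real^'n \<Rightarrow> real"
  assumes "continuous_on UNIV f"
    and "\<And>a b. a \<in> pos_simplex \<Longrightarrow> b \<in> pos_simplex \<Longrightarrow> markov_preorder pstar a b \<Longrightarrow> f b \<le> f a"
    and "(a, b) \<in> markov_order pstar"
  shows "f b \<le> f a"
proof -
  let ?R = "(pos_simplex \<times> pos_simplex) \<inter> {z. f (snd z) \<le> f (fst z)}"
  have "continuous_on UNIV (\<lambda>z. f (snd z))" "continuous_on UNIV (\<lambda>z. f (fst z))"
    by (rule continuous_on_compose2[OF assms(1)], auto intro: continuous_intros)+
  then have "closed {z. f (snd z) \<le> f (fst z)}"
    by (rule closed_Collect_le)
  then have "closedin (top_of_set (pos_simplex \<times> pos_simplex)) ?R"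
    by (simp add: closedin_closed_Int)
  then have "markov_order pstar \<subseteq> ?R"
    using assms(2) by (intro markov_order_least) (auto simp: trans_def)
  then show ?thesis using assms(3) by auto
qed

lemma f_divergence_markov_order:
  fixes pstar :: "real^'n"
  assumes convex: "convex_on UNIV \<phi>" and deriv: "\<And>y. (\<phi> has_real_derivative \<phi>' y) (at y)"
    and pos: "\<And>i. 0 < pstar$i" and "(a, b) \<in> markov_order pstar"
  shows "f_divergence \<phi> pstar b \<le> f_divergence \<phi> pstar a"
proof -
  have "continuous_on UNIV \<phi>"
    by (meson DERIV_isCont continuous_at_imp_continuous_on deriv)
  then have "continuous_on UNIV (\<lambda>p::real^'n. \<phi> (p$i / pstar$i))" for i
    by (rule continuous_on_compose2) (use pos in \<open>auto intro!: continuous_intros simp: less_imp_neq[symmetric]\<close>)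
  then have "continuous_on UNIV (f_divergence \<phi> pstar)"
    unfolding f_divergence_def by (intro continuous_on_sum continuous_on_mult continuous_on_const)
  then show ?thesis
    by (rule markov_order_antimono[OF _ f_divergence_markov_preorder[OF convex deriv pos] assms(4)])
qed

definition softplus :: "real \<Rightarrow> real \<Rightarrow> real" where
  "softplus s y = s * ln (1 + exp (y / s))"

lemma softplus_has_real_derivative:
  assumes "0 < s"
  shows "(softplus s has_real_derivative exp (y / s) / (1 + exp (y / s))) (at y)"
proof -
  have inner: "((\<lambda>y. 1 + exp (y / s)) has_real_derivative exp (y / s) / s) (at y)"
    using assms by (auto intro!: derivative_eq_intros)
  have "0 < 1 + exp (y / s)" by (simp add: add_pos_pos)
  from DERIV_cmult[OF DERIV_chain2[OF DERIV_ln_divide[OF this] inner], of s]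
  have "(softplus s has_real_derivative s * (1 / (1 + exp (y / s)) * (exp (y / s) / s))) (at y)"
    unfolding softplus_def .
  moreover have "s * (1 / (1 + exp (y / s)) * (exp (y / s) / s)) = exp (y / s) / (1 + exp (y / s))"
    using assms by simp
  ultimately show ?thesis by simp
qed

lemma convex_on_softplus:
  assumes "0 < s"
  shows "convex_on UNIV (softplus s)"
proof (rule convex_on_realI[OF connected_UNIV softplus_has_real_derivative[OF assms]])
  fix y z :: real assume "y \<le> z"
  then have "exp (y / s) \<le> exp (z / s)"
    using assms by (simp add: divide_right_mono)
  then have "1 / (1 + exp (z / s)) \<le> 1 / (1 + exp (y / s))"
    by (intro divide_left_mono mult_pos_pos add_pos_pos) auto
  moreover have "exp (u / s) / (1 + exp (u / s)) = 1 - 1 / (1 + exp (u / s))" for u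
  proof -
    have "0 < 1 + exp (u / s)" by (simp add: add_pos_pos)
    then show ?thesis by (simp add: field_simps)
  qed
  ultimately show "exp (y / s) / (1 + exp (y / s)) \<le> exp (z / s) / (1 + exp (z / s))"
    by simp
qed

lemma softplus_bounds:
  assumes "0 < s"
  shows "max y 0 \<le> softplus s y" "softplus s y \<le> max y 0 + s * ln 2"
proof -
  define u where "u = y / s"
  have y: "y = s * u" unfolding u_def using assms by simp
  have "0 < 1 + exp u" by (simp add: add_pos_pos)
  then have "u \<le> ln (1 + exp u)"
    using ln_le_cancel_iff[of "exp u" "1 + exp u"] by simp
  then show "max y 0 \<le> softplus s y"
    unfolding softplus_def y using assms by (simp add: u_def[symmetric] mult_left_mono)
  have "1 + exp u \<le> 2 * exp (max u 0)"
    by (cases "u \<le> 0") (auto simp: max_def)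
  then have "ln (1 + exp u) \<le> max u 0 + ln 2"
    using ln_le_cancel_iff[of "1 + exp u" "2 * exp (max u 0)"] by (simp add: add_pos_pos ln_mult)
  then have "s * ln (1 + exp u) \<le> s * (max u 0 + ln 2)"
    using assms by (simp add: mult_left_mono)
  then show "softplus s y \<le> max y 0 + s * ln 2"
    unfolding softplus_def y using assms by (simp add: u_def[symmetric] max_mult_distrib_left distrib_left)
qed

lemma convex_on_UNIV_shift:
  fixes f :: "real \<Rightarrow> real"
  assumes "convex_on UNIV f"
  shows "convex_on UNIV (\<lambda>y. f (y - \<tau>))"
proof (rule convex_onI)
  fix t x y :: real assume "0 < t" "t < 1"
  have "(1 - t) *\<^sub>R x + t *\<^sub>R y - \<tau> = (1 - t) *\<^sub>R (x - \<tau>) + t *\<^sub>R (y - \<tau>)"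
    by (simp add: algebra_simps)
  then show "f ((1 - t) *\<^sub>R x + t *\<^sub>R y - \<tau>) \<le> (1 - t) * f (x - \<tau>) + t * f (y - \<tau>)"
    using convex_onD[OF assms, of t "x - \<tau>" "y - \<tau>"] \<open>0 < t\<close> \<open>t < 1\<close> by simp
qed simp

lemma markov_order_hinge_sum:
  fixes pstar a b :: "real^'n"
  assumes "pstar \<in> pos_simplex" and "(a, b) \<in> markov_order pstar"
  shows "(\<Sum>i\<in>UNIV. max (b$i - \<tau> * pstar$i) 0) \<le> (\<Sum>i\<in>UNIV. max (a$i - \<tau> * pstar$i) 0)"
proof -
  have pos: "\<And>i. 0 < pstar$i" and total: "(\<Sum>i\<in>UNIV. pstar$i) = 1"
    using assms(1) unfolding pos_simplex_def by auto
  define hinge where "hinge p = (\<Sum>i\<in>UNIV. max (p$i - \<tau> * pstar$i) 0)" for p :: "real^'n"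
  define H where "H s = f_divergence (\<lambda>y. softplus s (y - \<tau>)) pstar" for s
  have hinge_eq: "max (p$i - \<tau> * pstar$i) 0 = pstar$i * max (p$i / pstar$i - \<tau>) 0" for p :: "real^'n" and i
    using pos[of i] by (simp add: max_mult_distrib_left right_diff_distrib mult.commute)
  \<comment> \<open>H s is a smooth Lyapunov function within s ln 2 of the piecewise linear one\<close>
  have "hinge b \<le> hinge a + e" if "0 < e" for e
  proof -
    define s where "s = e / ln 2"
    have "0 < s" unfolding s_def using \<open>0 < e\<close> by simp
    have "hinge b \<le> H s b"
      unfolding hinge_def H_def f_divergence_def hinge_eq
      using softplus_bounds(1)[OF \<open>0 < s\<close>] pos by (intro sum_mono mult_left_mono) (auto intro: less_imp_le)
    also have "H s b \<le> H s a"
    proof -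
      have "((\<lambda>y. y - \<tau>) has_real_derivative 1) (at y)" for y
        by (auto intro!: derivative_eq_intros)
      from DERIV_chain2[OF softplus_has_real_derivative[OF \<open>0 < s\<close>] this]
      show ?thesis unfolding H_def
        by (intro f_divergence_markov_order[OF convex_on_UNIV_shift[OF convex_on_softplus]] pos assms(2))
          (use \<open>0 < s\<close> in auto)
    qed
    also have "H s a \<le> (\<Sum>i\<in>UNIV. pstar$i * (max (a$i / pstar$i - \<tau>) 0 + s * ln 2))"
      unfolding H_def f_divergence_def
      using softplus_bounds(2)[OF \<open>0 < s\<close>] pos by (intro sum_mono mult_left_mono) (auto intro: less_imp_le)
    also have "\<dots> = hinge a + e"
      unfolding hinge_def hinge_eq s_def
      by (simp add: distrib_left sum.distrib total flip: sum_distrib_right)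
    finally show ?thesis .
  qed
  then show ?thesis unfolding hinge_def by (rule field_le_epsilon)
qed

lemma markov_order_imp_Qcone:
  fixes pstar a b :: "real^('n::{finite,linorder})"
  assumes "pstar \<in> pos_simplex" and "(a, b) \<in> markov_order pstar"
  shows "b - a \<in> Qcone a pstar"
proof (rule mem_Qcone_if_upset_sums_nonpos)
  have pos: "\<And>i. 0 < pstar$i" using assms(1) unfolding pos_simplex_def by auto
  show "(\<Sum>k\<in>UNIV. (b - a)$k) = 0"
    using markov_order_simplex[OF assms(2)] unfolding pos_simplex_def by (simp add: sum_subtractf)
  fix U assume up: "\<And>i j. i \<in> U \<Longrightarrow> a$i / pstar$i < a$j / pstar$j \<Longrightarrow> j \<in> U"
  show "(\<Sum>k\<in>U. (b - a)$k) \<le> 0"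
  proof (cases "U = {}")
    case False
    \<comment> \<open>cut the hinge at the least ratio a$i / pstar$i on the up-set U\<close>
    define \<tau> where "\<tau> = Min ((\<lambda>i. a$i / pstar$i) ` U)"
    have "\<tau> \<in> (\<lambda>i. a$i / pstar$i) ` U"
      unfolding \<tau>_def using False by (intro Min_in) auto
    then obtain i0 where "i0 \<in> U" and \<tau>_eq: "\<tau> = a$i0 / pstar$i0" by auto
    have above: "0 \<le> a$i - \<tau> * pstar$i" if "i \<in> U" for i
      using Min_le[of "(\<lambda>i. a$i / pstar$i) ` U" "a$i / pstar$i"] that pos[of i]
      by (simp add: \<tau>_def[symmetric] pos_le_divide_eq)
    have below: "a$i - \<tau> * pstar$i \<le> 0" if "i \<notin> U" for i
    proof -
      have "a$i / pstar$i \<le> \<tau>"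
        using up[OF \<open>i0 \<in> U\<close>, of i] that \<tau>_eq not_le by metis
      then show ?thesis using pos[of i] by (simp add: pos_divide_le_eq)
    qed
    have "(\<Sum>i\<in>UNIV. max (a$i - \<tau> * pstar$i) 0) = (\<Sum>i\<in>UNIV. if i \<in> U then a$i - \<tau> * pstar$i else 0)"
      using above below by (intro sum.cong) (auto simp: max_def intro: order_antisym)
    also have "\<dots> = (\<Sum>i\<in>U. a$i - \<tau> * pstar$i)"
      by (simp add: sum.If_cases)
    moreover have "(\<Sum>i\<in>U. b$i - \<tau> * pstar$i) \<le> (\<Sum>i\<in>UNIV. max (b$i - \<tau> * pstar$i) 0)"
      by (rule order_trans[OF sum_mono sum_mono2]) auto
    ultimately show ?thesis
      using markov_order_hinge_sum[OF assms, of \<tau>] by (simp add: sum_subtractf)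
  qed simp
qed

(* q i j is the rate of the jump j -> i. On the pair {u,w} the fluxes q i j * pstar$j =
   a * pstar$i * pstar$j are symmetric, so pstar is an equilibrium (detailed balance). *)
definition exchange_rates :: "real^'n \<Rightarrow> 'n \<Rightarrow> 'n \<Rightarrow> real \<Rightarrow> 'n \<Rightarrow> 'n \<Rightarrow> real" where
  "exchange_rates pstar u w a i j = (if {i, j} = {u, w} then a * pstar$i else 0)"

lemma markov_chain_exchange_rates:
  fixes pstar :: "real^'n"
  assumes "\<And>i. 0 < pstar$i" and "0 \<le> a"
  shows "markov_chain pstar (exchange_rates pstar u w a)"
  unfolding markov_chain_def
proof (intro conjI allI impI)
  fix i j :: 'n
  show "0 \<le> exchange_rates pstar u w a i j"
    using assms(1)[of i] assms(2) by (simp add: exchange_rates_def)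
next
  fix i :: 'n
  show "(\<Sum>j\<in>-{i}. exchange_rates pstar u w a i j * pstar$j)
      = (\<Sum>j\<in>-{i}. exchange_rates pstar u w a j i) * pstar$i"
    unfolding sum_distrib_right exchange_rates_def by (intro sum.cong) (auto simp: insert_commute)
qed

lemma kolmogorov_rhs_exchange_rates:
  assumes "u \<noteq> w"
  shows "kolmogorov_rhs (exchange_rates pstar u w a) p
    = (a * (pstar$w * p$u - pstar$u * p$w)) *\<^sub>R gamma_vec u w"
proof -
  have "kolmogorov_rhs (exchange_rates pstar u w a) p $ k
      = (\<Sum>j\<in>-{k}. if {k, j} = {u, w} then a * (pstar$k * p$j - pstar$j * p$k) else 0)" for k
    unfolding kolmogorov_rhs_def exchange_rates_def vec_lambda_beta
    by (intro sum.cong refl) (auto simp: insert_commute algebra_simps)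
  then show ?thesis
    using assms by (auto simp: vec_eq_iff gamma_vec_def doubleton_eq_iff algebra_simps)
qed

lemma markov_preorder_exchange:
  fixes pstar p :: "real^'n"
  assumes pos: "\<And>i. 0 < pstar$i" and "u \<noteq> w" and "0 \<le> \<delta>"
    and small: "\<delta> * (pstar$u + pstar$w) < pstar$w * p$u - pstar$u * p$w"
  shows "markov_preorder pstar p (p + \<delta> *\<^sub>R gamma_vec u w)"
proof -
  \<comment> \<open>Along the ray p + m \<gamma>, the exchange chain with rate a makes
    m' = a (y0 - \<sigma> m), which is solved by m = D (1 - exp (- a \<sigma> t)).\<close>
  define \<sigma> where "\<sigma> = pstar$u + pstar$w"
  define y0 where "y0 = pstar$w * p$u - pstar$u * p$w"
  define D where "D = y0 / \<sigma>"
  have "0 < \<sigma>" unfolding \<sigma>_def using pos[of u] pos[of w] by simp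
  then have "\<delta> < D" using small by (simp add: D_def y0_def \<sigma>_def pos_less_divide_eq)
  then have "0 < 1 - \<delta> / D" and "1 - \<delta> / D \<le> 1"
    using \<open>0 \<le> \<delta>\<close> by (auto simp: divide_nonneg_pos)
  define \<kappa> where "\<kappa> = - ln (1 - \<delta> / D)"
  have "0 \<le> \<kappa>" unfolding \<kappa>_def using \<open>1 - \<delta> / D \<le> 1\<close> \<open>0 < 1 - \<delta> / D\<close> by simp
  define a where "a = \<kappa> / \<sigma>"
  define m where "m t = D * (1 - exp (- \<kappa> * t))" for t
  define P where "P t = p + m t *\<^sub>R gamma_vec u w" for t
  have "kolmogorov_rhs (exchange_rates pstar u w a) (P t) = (D * \<kappa> * exp (- \<kappa> * t)) *\<^sub>R gamma_vec u w" for t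
  proof -
    have "pstar$w * P t $ u - pstar$u * P t $ w = y0 - \<sigma> * m t"
      using \<open>u \<noteq> w\<close> by (simp add: P_def gamma_vec_def y0_def \<sigma>_def algebra_simps)
    also have "\<dots> = y0 * exp (- \<kappa> * t)"
      using \<open>0 < \<sigma>\<close> by (simp add: m_def D_def algebra_simps)
    finally show ?thesis
      using \<open>0 < \<sigma>\<close> by (simp add: kolmogorov_rhs_exchange_rates[OF \<open>u \<noteq> w\<close>] a_def D_def)
  qed
  moreover have "(P has_vector_derivative (D * \<kappa> * exp (- \<kappa> * t)) *\<^sub>R gamma_vec u w) (at t within {0..1})" for t
    unfolding P_def m_def by (auto intro!: derivative_eq_intros)
  moreover have "m 1 = \<delta>"
    using \<open>0 < 1 - \<delta> / D\<close> \<open>\<delta> < D\<close> \<open>0 \<le> \<delta>\<close> by (simp add: m_def \<kappa>_def)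
  moreover have "markov_chain pstar (exchange_rates pstar u w a)"
    using \<open>0 \<le> \<kappa>\<close> \<open>0 < \<sigma>\<close> by (intro markov_chain_exchange_rates pos) (simp add: a_def)
  ultimately show ?thesis
    unfolding markov_preorder_def by (intro exI[of _ "exchange_rates pstar u w a"] exI[of _ P]) (simp add: P_def m_def)
qed

lemma markov_preorder_exchange_near:
  fixes pstar p p0 :: "real^'n"
  assumes "pstar \<in> pos_simplex" and "u \<noteq> w"
    and gap: "4 * \<eta> < pstar$w * p0$u - pstar$u * p0$w"
    and near: "\<And>k. \<bar>p$k - p0$k\<bar> \<le> \<eta>" and "0 \<le> \<delta>" and "\<delta> \<le> \<eta>"
  shows "markov_preorder pstar p (p + \<delta> *\<^sub>R gamma_vec u w)"
proof (rule markov_preorder_exchange[OF _ \<open>u \<noteq> w\<close> \<open>0 \<le> \<delta>\<close>])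
  have pos: "\<And>i. 0 < pstar$i" and total: "(\<Sum>i\<in>UNIV. pstar$i) = 1"
    using assms(1) unfolding pos_simplex_def by auto
  then show "0 < pstar$i" for i by simp
  have le1: "pstar$i \<le> 1" for i
    using member_le_sum[of i UNIV "\<lambda>i. pstar$i"] pos total by (simp add: less_imp_le)
  have perturb: "\<bar>pstar$i * (p$k - p0$k)\<bar> \<le> \<eta>" for i k
    using mult_left_le_one_le[OF abs_ge_zero abs_ge_zero, of "pstar$i" "p$k - p0$k"] le1[of i] pos[of i]
      near[of k] by (simp add: abs_mult)
  have "\<delta> * (pstar$u + pstar$w) \<le> \<eta> * 2"
    using mult_mono[OF \<open>\<delta> \<le> \<eta>\<close>, of "pstar$u + pstar$w" 2] le1[of u] le1[of w] pos[of u] pos[of w]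
      \<open>0 \<le> \<delta>\<close> \<open>\<delta> \<le> \<eta>\<close>
    by simp
  moreover have "pstar$w * p$u - pstar$u * p$w
      = (pstar$w * p0$u - pstar$u * p0$w) + pstar$w * (p$u - p0$u) - pstar$u * (p$w - p0$w)"
    by (simp add: algebra_simps)
  ultimately show "\<delta> * (pstar$u + pstar$w) < pstar$w * p$u - pstar$u * p$w"
    using gap perturb[of w u] perturb[of u w] by (simp add: abs_le_iff)
qed

lemma markov_preorder_sgn_exchange_near:
  fixes pstar p p0 :: "real^'n"
  assumes "pstar \<in> pos_simplex" and "j \<noteq> i"
    and gap: "p0$j / pstar$j \<noteq> p0$i / pstar$i \<Longrightarrow> 4 * \<eta> < \<bar>pstar$i * p0$j - pstar$j * p0$i\<bar>"
    and near: "\<And>k. \<bar>p$k - p0$k\<bar> \<le> \<eta>" and "0 \<le> \<delta>" and "\<delta> \<le> \<eta>"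
  shows "markov_preorder pstar p (p + \<delta> *\<^sub>R (sgn (p0$j / pstar$j - p0$i / pstar$i) *\<^sub>R gamma_vec j i))"
proof -
  have "0 < pstar$i" "0 < pstar$j" using assms(1) unfolding pos_simplex_def by auto
  consider "p0$j / pstar$j = p0$i / pstar$i" | "p0$i / pstar$i < p0$j / pstar$j" | "p0$j / pstar$j < p0$i / pstar$i"
    by linarith
  then show ?thesis
  proof cases
    case 1
    then show ?thesis by (simp add: markov_preorder_refl)
  next
    case 2
    then have "pstar$j * p0$i < pstar$i * p0$j"
      using \<open>0 < pstar$i\<close> \<open>0 < pstar$j\<close> by (simp add: divide_simps mult.commute)
    then show ?thesis
      using 2 gap by (simp add: markov_preorder_exchange_near[OF assms(1,2) _ near \<open>0 \<le> \<delta>\<close> \<open>\<delta> \<le> \<eta>\<close>])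
  next
    case 3
    then have "pstar$i * p0$j < pstar$j * p0$i"
      using \<open>0 < pstar$i\<close> \<open>0 < pstar$j\<close> by (simp add: divide_simps mult.commute)
    moreover have "- gamma_vec j i = gamma_vec i j"
      by (simp add: gamma_vec_def vec_eq_iff \<open>j \<noteq> i\<close>)
    ultimately show ?thesis
      using 3 gap \<open>j \<noteq> i\<close>
      by (simp add: markov_preorder_exchange_near[OF assms(1) _ _ near \<open>0 \<le> \<delta>\<close> \<open>\<delta> \<le> \<eta>\<close>])
  qed
qed

lemma markov_order_walk:
  fixes d :: "'e \<Rightarrow> real^'n"
  assumes "finite E"
    and simplex: "\<And>F. F \<subseteq> E \<Longrightarrow> p + sum d F \<in> pos_simplex"
    and step: "\<And>F e. F \<subseteq> E \<Longrightarrow> e \<in> E \<Longrightarrow> markov_preorder pstar (p + sum d F) (p + sum d F + d e)"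
  shows "(p, p + sum d E) \<in> markov_order pstar"
proof -
  have "(p, p + sum d F) \<in> markov_order pstar" if "F \<subseteq> E" for F
    using finite_subset[OF that \<open>finite E\<close>] that
  proof (induction F rule: finite_induct)
    case empty
    then show ?case
      using simplex[of "{}"] by (simp add: markov_preorder_imp_markov_order markov_preorder_refl)
  next
    case (insert e F)
    have "p + sum d (insert e F) = p + sum d F + d e"
      using insert.hyps by (simp add: algebra_simps)
    moreover have "(p + sum d F, p + sum d F + d e) \<in> markov_order pstar"
      using insert.prems simplex[of F] simplex[of "insert e F"] step[of F e] \<open>p + sum d (insert e F) = _\<close>
      by (intro markov_preorder_imp_markov_order) auto
    ultimately show ?case
      using insert by (metis markov_order_trans insert_subset)
  qed
  then show ?thesis by simp
qed

lemma sum_gamma_vec: "j \<noteq> i \<Longrightarrow> (\<Sum>k\<in>UNIV. gamma_vec j i $ k) = 0"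
  by (simp add: gamma_vec_def if_distrib sum.If_cases Diff_eq Int_absorb1)

lemma abs_gamma_vec_le_1: "\<bar>gamma_vec j i $ k\<bar> \<le> 1"
  by (simp add: gamma_vec_def)

lemma pos_simplex_add:
  assumes "p \<in> pos_simplex" and "(\<Sum>k\<in>UNIV. v$k) = 0" and "\<And>k. \<bar>v$k\<bar> < p$k"
  shows "p + v \<in> pos_simplex"
proof -
  have "0 < p$k + v$k" for k using assms(3)[of k] by (simp add: abs_less_iff)
  then show ?thesis using assms(1,2) unfolding pos_simplex_def by (simp add: sum.distrib)
qed

lemma abs_component_sum_scaleR_le:
  fixes g :: "'e \<Rightarrow> real^'n"
  assumes "\<And>e. e \<in> F \<Longrightarrow> 0 \<le> c e" and "\<And>e. \<bar>g e $ k\<bar> \<le> 1"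
  shows "\<bar>(\<Sum>e\<in>F. c e *\<^sub>R g e) $ k\<bar> \<le> sum c F"
proof -
  have "\<bar>(\<Sum>e\<in>F. c e *\<^sub>R g e) $ k\<bar> \<le> (\<Sum>e\<in>F. \<bar>c e * g e $ k\<bar>)"
    by (simp add: sum_component sum_abs)
  also have "\<dots> \<le> sum c F"
    using assms by (intro sum_mono) (simp add: abs_mult mult_left_le)
  finally show ?thesis .
qed

lemma markov_order_generator_walk:
  fixes pstar p0 :: "real^('n::{finite,linorder})"
  defines "E \<equiv> {(j::'n, i). j < i}"
    and "g \<equiv> \<lambda>(j,i). sgn (p0$j / pstar$j - p0$i / pstar$i) *\<^sub>R gamma_vec j i"
  assumes "pstar \<in> pos_simplex" and "p0 \<in> pos_simplex" and "\<And>k. \<eta> < p0$k"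
    and gap: "\<And>j i. p0$j / pstar$j \<noteq> p0$i / pstar$i \<Longrightarrow> 4 * \<eta> < \<bar>pstar$i * p0$j - pstar$j * p0$i\<bar>"
    and c_nonneg: "\<And>e. 0 \<le> c e" and "sum c E \<le> \<eta>"
  shows "(p0, p0 + (\<Sum>e\<in>E. c e *\<^sub>R g e)) \<in> markov_order pstar"
proof (rule markov_order_walk)
  have near: "\<bar>(\<Sum>e\<in>F. c e *\<^sub>R g e) $ k\<bar> \<le> \<eta>" if "F \<subseteq> E" for F k
  proof -
    have "\<bar>(\<Sum>e\<in>F. c e *\<^sub>R g e) $ k\<bar> \<le> sum c F"
      using c_nonneg by (intro abs_component_sum_scaleR_le)
        (auto simp: g_def case_prod_beta abs_mult abs_sgn_eq intro: mult_le_one abs_gamma_vec_le_1)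
    also have "\<dots> \<le> sum c E"
      using that c_nonneg by (intro sum_mono2) (auto simp: E_def)
    finally show ?thesis using \<open>sum c E \<le> \<eta>\<close> by simp
  qed
  show "p0 + (\<Sum>e\<in>F. c e *\<^sub>R g e) \<in> pos_simplex" if "F \<subseteq> E" for F
  proof (rule pos_simplex_add[OF \<open>p0 \<in> pos_simplex\<close>])
    have g_sum: "(\<Sum>k\<in>UNIV. g e $ k) = 0" if "e \<in> E" for e
      using that by (auto simp: E_def g_def sum_gamma_vec simp flip: sum_distrib_left)
    have "(\<Sum>k\<in>UNIV. (\<Sum>e\<in>F. c e *\<^sub>R g e) $ k) = (\<Sum>e\<in>F. c e * (\<Sum>k\<in>UNIV. g e $ k))"
      unfolding sum_component by (subst sum.swap) (simp add: sum_distrib_left)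
    also have "\<dots> = 0"
      using \<open>F \<subseteq> E\<close> g_sum by (intro sum.neutral ballI) (metis subsetD mult_zero_right)
    finally show "(\<Sum>k\<in>UNIV. (\<Sum>e\<in>F. c e *\<^sub>R g e) $ k) = 0" .
    show "\<bar>(\<Sum>e\<in>F. c e *\<^sub>R g e) $ k\<bar> < p0$k" for k
      using near[OF that, of k] \<open>\<eta> < p0$k\<close> by linarith
  qed
  show "markov_preorder pstar (p0 + (\<Sum>e\<in>F. c e *\<^sub>R g e)) (p0 + (\<Sum>e\<in>F. c e *\<^sub>R g e) + c e *\<^sub>R g e)"
    if "F \<subseteq> E" and "e \<in> E" for F e
  proof -
    obtain j i where e: "e = (j, i)" "j < i" using \<open>e \<in> E\<close> unfolding E_def by auto
    have "c e \<le> \<eta>"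
      using \<open>e \<in> E\<close> \<open>sum c E \<le> \<eta>\<close> c_nonneg member_le_sum[of e E c] by (simp add: E_def)
    then have "markov_preorder pstar (p0 + (\<Sum>e\<in>F. c e *\<^sub>R g e))
        (p0 + (\<Sum>e\<in>F. c e *\<^sub>R g e) + c e *\<^sub>R (sgn (p0$j / pstar$j - p0$i / pstar$i) *\<^sub>R gamma_vec j i))"
      using near[OF \<open>F \<subseteq> E\<close>] c_nonneg[of e] \<open>j < i\<close>
      by (intro markov_preorder_sgn_exchange_near[OF \<open>pstar \<in> pos_simplex\<close> _ gap]) auto
    then show ?thesis by (simp add: e g_def)
  qed
qed (simp add: E_def)

lemma Qcone_ray_markov_order:
  fixes pstar p0 x :: "real^('n::{finite,linorder})"
  assumes "pstar \<in> pos_simplex" and "p0 \<in> pos_simplex" and "x \<in> Qcone p0 pstar"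
  shows "\<exists>\<epsilon>>0. (p0, p0 + \<epsilon> *\<^sub>R x) \<in> markov_order pstar"
proof -
  define E where "E = {(j::'n, i). j < i}"
  define g where "g = (\<lambda>(j,i). sgn (p0$j / pstar$j - p0$i / pstar$i) *\<^sub>R gamma_vec j i)"
  obtain c where c_nonneg: "\<And>e. 0 \<le> c e" and x_eq: "x = (\<Sum>e\<in>E. c e *\<^sub>R g e)"
  proof -
    obtain c' where "\<forall>j i. 0 \<le> c' j i"
      and "x = (\<Sum>(j,i)\<in>E. c' j i *\<^sub>R (sgn (p0$j / pstar$j - p0$i / pstar$i) *\<^sub>R gamma_vec j i))"
      using \<open>x \<in> Qcone p0 pstar\<close> unfolding Qcone_def E_def by blast
    then show ?thesis
      by (intro that[of "case_prod c'"]) (auto simp: g_def case_prod_beta)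
  qed
  \<comment> \<open>\<eta> keeps the walk inside the simplex and each exchange below the gap of its pair at p0\<close>
  define cross where "cross = (\<lambda>(j,i). \<bar>pstar$i * p0$j - pstar$j * p0$i\<bar>)"
  define gap where "gap = Min (insert 1 (cross ` {e. cross e \<noteq> 0}))"
  define \<mu> where "\<mu> = Min (range (\<lambda>k. p0$k))"
  define \<eta> where "\<eta> = min (\<mu> / 2) (gap / 8)"
  define \<epsilon> where "\<epsilon> = \<eta> / (sum c E + 1)"
  have "0 < gap" and gap_le: "\<And>e. cross e \<noteq> 0 \<Longrightarrow> gap \<le> cross e"
    unfolding gap_def cross_def by (auto simp: case_prod_beta)
  have "0 < \<mu>" and \<mu>_le: "\<And>k. \<mu> \<le> p0$k"
    using \<open>p0 \<in> pos_simplex\<close> unfolding \<mu>_def pos_simplex_def by auto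
  then have "0 < \<eta>" unfolding \<eta>_def using \<open>0 < gap\<close> by simp
  have \<eta>_less: "\<eta> < p0$k" for k
    using \<mu>_le[of k] \<open>0 < \<mu>\<close> unfolding \<eta>_def by linarith
  have "0 \<le> sum c E" using c_nonneg by (simp add: sum_nonneg)
  then have "0 < \<epsilon>" and "\<epsilon> * sum c E \<le> \<eta>"
    unfolding \<epsilon>_def using \<open>0 < \<eta>\<close> by (simp_all add: field_simps)
  have "4 * \<eta> < \<bar>pstar$i * p0$j - pstar$j * p0$i\<bar>" if "p0$j / pstar$j \<noteq> p0$i / pstar$i" for j i
  proof -
    have "0 < pstar$i" "0 < pstar$j"
      using \<open>pstar \<in> pos_simplex\<close> unfolding pos_simplex_def by auto
    then have "cross (j, i) \<noteq> 0" using that by (auto simp: cross_def frac_eq_eq mult.commute)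
    then show ?thesis using gap_le[of "(j, i)"] \<open>0 < gap\<close> by (simp add: \<eta>_def cross_def)
  qed
  then have "(p0, p0 + (\<Sum>e\<in>E. (\<epsilon> * c e) *\<^sub>R g e)) \<in> markov_order pstar"
    unfolding E_def g_def using assms(1,2) \<eta>_less \<open>0 < \<epsilon>\<close> c_nonneg \<open>\<epsilon> * sum c E \<le> \<eta>\<close>
    by (intro markov_order_generator_walk) (auto simp: E_def sum_distrib_left)
  then show ?thesis
    using \<open>0 < \<epsilon>\<close> by (auto simp: x_eq scaleR_sum_right)
qed

lemma cond_manifold_ray:
  assumes "p \<in> cond_manifold k m M" and "p + x \<in> cond_manifold k m M"
  shows "p + t *\<^sub>R x \<in> cond_manifold k m M"
proof -
  have "(\<Sum>j\<in>UNIV. m r $ j * x $ j) = 0" if "r \<le> k" for r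
    using assms that unfolding cond_manifold_def by (simp add: distrib_left sum.distrib)
  then show ?thesis
    using assms(1) unfolding cond_manifold_def
    by (simp add: distrib_left sum.distrib algebra_simps flip: sum_distrib_left)
qed

lemma markov_order_escape_along_Qcone:
  fixes pstar p0 x :: "real^('n::{finite,linorder})"
  assumes "pstar \<in> pos_simplex" and "p0 \<in> cond_manifold k m M \<inter> pos_simplex"
    and "x \<in> Qcone p0 pstar" and "x \<noteq> 0" and "p0 + x \<in> cond_manifold k m M"
  shows "\<exists>p1 \<in> cond_manifold k m M \<inter> pos_simplex. p1 \<noteq> p0 \<and> (p0, p1) \<in> markov_order pstar"
proof -
  obtain \<epsilon> where "0 < \<epsilon>" and reach: "(p0, p0 + \<epsilon> *\<^sub>R x) \<in> markov_order pstar"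
    using Qcone_ray_markov_order assms(1-3) by blast
  moreover have "p0 + \<epsilon> *\<^sub>R x \<in> cond_manifold k m M"
    using cond_manifold_ray assms(2,5) by blast
  ultimately show ?thesis
    using markov_order_simplex(2)[OF reach] \<open>x \<noteq> 0\<close> by (intro bexI[of _ "p0 + \<epsilon> *\<^sub>R x"]) auto
qed

theorem corollary1:
  fixes pstar p0 :: "real^('n::{finite,linorder})"
    and k :: nat and m :: "nat \<Rightarrow> real^('n::{finite,linorder})" and M :: "nat \<Rightarrow> real"
  assumes "CARD('n::{finite,linorder}) \<ge> 2"
    and "pstar \<in> pos_simplex"
    and "\<forall>j. m 0 $ j = 1" and "M 0 = 1"
    and "cond_manifold k m M \<inter> pos_simplex \<noteq> {}"
    and "p0 \<in> cond_manifold k m M \<inter> pos_simplex"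
  shows "(\<not> (\<exists>p1 \<in> cond_manifold k m M \<inter> pos_simplex.
              p1 \<noteq> p0 \<and> (p0, p1) \<in> markov_order pstar))
         \<longleftrightarrow> ((\<lambda>x. p0 + x) ` Qcone p0 pstar) \<inter> cond_manifold k m M = {p0}"
    (is "\<not> ?escape \<longleftrightarrow> ?P0 \<inter> _ = _")
proof
  assume "\<not> ?escape"
  then have "x = 0" if "x \<in> Qcone p0 pstar" "p0 + x \<in> cond_manifold k m M" for x
    using markov_order_escape_along_Qcone[OF assms(2,6) that(1) _ that(2)] by argo
  then have "?P0 \<inter> cond_manifold k m M \<subseteq> {p0}"
    by force
  moreover have "p0 \<in> ?P0"
    using convex_cone_contains_0[OF convex_cone_Qcone] by (rule rev_image_eqI) simp
  ultimately show "?P0 \<inter> cond_manifold k m M = {p0}"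
    using assms(6) by auto
next
  assume P0_cap: "?P0 \<inter> cond_manifold k m M = {p0}"
  have "p1 \<in> ?P0" if "(p0, p1) \<in> markov_order pstar" for p1
    using markov_order_imp_Qcone[OF assms(2) that] by (rule rev_image_eqI) simp
  then show "\<not> ?escape"
    using P0_cap by auto
qed

end
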